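(* Let $\mathcal A=(Q,T,\delta,X)$ be an OCAPT with initial state $q_0$ and target set $F\subseteq Q$. If there is a valuation $V$ such that all infinite $V$-runs of $\mathcal A$ from $(q_0,0)$ reach $F$, then there is a valuation $V'$ with $V'(x)=\exp(|\mathcal A|^{\mathcal O(1)})$ (i.e. bounded by $2^{p(|\mathcal A|)}$ for a fixed polynomial $p$) for all $x\in X$, such that all infinite $V'$-runs of $\mathcal A$ from $(q_0,0)$ reach $F$.
   Context: An OCAPT is $\mathcal A=(Q,T,\delta,X)$ with finite state set $Q$, finite parameter set $X$, transitions $T\subseteq Q\times Q$, and $\delta:T\to Op$ where $Op$ consists of updates $+a$ with $a\in\{-1,0,1\}$, the zero test $=0$, and parametric tests $=x$, $\ge x$ ($x\in X$); no parametric updates. A valuation is $V:X\to\mathbb{N}$. A $V$-run is a sequence of configurations $(q_i,c_i)\in Q\times\mathbb{N}$ with $(q_i,q_{i+1})\in T$ such that tests hold ($c_i=0$, $c_i=V(x)$, $c_i\ge V(x)$, with $c_{i+1}=c_i$) and updates are applied ($c_{i+1}=c_i+a$). A run reaches $F$ if some state in it belongs to $F$. *)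

theory Defs
  imports Main
begin

datatype op =
    Upd int        \<comment> \<open>update +a, with a in {-1,0,1} (enforced by wf)\<close>
  | ZeroTest
  | EqTest nat
  | GeTest nat

record ocapt =
  St    :: "nat set"
  Tr    :: "(nat \<times> nat) set"
  Lab   :: "nat \<times> nat \<Rightarrow> op"
  Par   :: "nat set"

definition op_wf :: "nat set \<Rightarrow> op \<Rightarrow> bool" where
  "op_wf X p \<longleftrightarrow> (case p of
      Upd a \<Rightarrow> a \<in> {-1, 0, 1}
    | ZeroTest \<Rightarrow> True
    | EqTest x \<Rightarrow> x \<in> X
    | GeTest x \<Rightarrow> x \<in> X)"

definition ocapt_wf :: "ocapt \<Rightarrow> bool" where
  "ocapt_wf A \<longleftrightarrow> finite (St A) \<and> finite (Par A) \<and> Tr A \<subseteq> St A \<times> St A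
     \<and> (\<forall>t\<in>Tr A. op_wf (Par A) (Lab A t))"

text \<open>Size of the automaton: number of states + transitions + parameters
  (each operation has constant size).\<close>
definition ocapt_size :: "ocapt \<Rightarrow> nat" where
  "ocapt_size A = card (St A) + card (Tr A) + card (Par A)"

definition step :: "ocapt \<Rightarrow> (nat \<Rightarrow> nat) \<Rightarrow> nat \<times> nat \<Rightarrow> nat \<times> nat \<Rightarrow> bool" where
  "step A V cf cf' \<longleftrightarrow> (let (q, c) = cf; (q', c') = cf' in
     (q, q') \<in> Tr A \<and>
     (case Lab A (q, q') of
        Upd a \<Rightarrow> int c' = int c + a
      | ZeroTest \<Rightarrow> c = 0 \<and> c' = c
      | EqTest x \<Rightarrow> c = V x \<and> c' = c
      | GeTest x \<Rightarrow> c \<ge> V x \<and> c' = c))"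

definition inf_run :: "ocapt \<Rightarrow> (nat \<Rightarrow> nat) \<Rightarrow> nat \<times> nat \<Rightarrow> (nat \<Rightarrow> nat \<times> nat) \<Rightarrow> bool" where
  "inf_run A V cf0 \<rho> \<longleftrightarrow> \<rho> 0 = cf0 \<and> (\<forall>i. step A V (\<rho> i) (\<rho> (Suc i)))"

definition reaches :: "nat set \<Rightarrow> (nat \<Rightarrow> nat \<times> nat) \<Rightarrow> bool" where
  "reaches F \<rho> \<longleftrightarrow> (\<exists>i. fst (\<rho> i) \<in> F)"

definition all_inf_runs_reach ::
  "ocapt \<Rightarrow> (nat \<Rightarrow> nat) \<Rightarrow> nat \<Rightarrow> nat set \<Rightarrow> bool" where
  "all_inf_runs_reach A V q0 F \<longleftrightarrow> (\<forall>\<rho>. inf_run A V (q0, 0) \<rho> \<longrightarrow> reaches F \<rho>)"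

end

theory Submission
  imports Defs
begin

text \<open>If all infinite V-runs from (q0, 0) reach F then, by Koenig's lemma, the F-avoiding
  runs from (q0, 0) have bounded length. Let n be the number of states and D = n!. If two
  consecutive values a < b of {0} \<union> V(X) satisfy b - a > D + n + 2, lower every parameter
  value \<ge> b by D. Every F-avoiding run under the lowered valuation lifts to an F-avoiding
  V-run that is at least as long: pieces staying below or above the gap are shifted by 0 or
  D, and a piece crossing the gap repeats a state at two counter values differing by some
  d \<le> n, so running that cycle D/d more times adds exactly D to the counter. Thus the lowered
  valuation is again good and has smaller total; once every gap is at most n! + n + 2, all
  values are bounded by (n! + n + 2)(|X| + 1) \<le> 2^((|A| + 1)^3).\<close>

lemma step_counter_bound:
  assumes "ocapt_wf A" "step A V cf cf'"
  shows "(fst cf, fst cf') \<in> Tr A \<and> \<bar>int (snd cf') - int (snd cf)\<bar> \<le> 1"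
proof -
  obtain q c q' c' where cf: "cf = (q, c)" "cf' = (q', c')" by fastforce
  then have "(q, q') \<in> Tr A" using assms(2) by (simp add: step_def)
  then have "op_wf (Par A) (Lab A (q, q'))" using assms(1) by (auto simp: ocapt_wf_def)
  then show ?thesis
    using assms(2) \<open>(q, q') \<in> Tr A\<close> unfolding cf step_def op_wf_def by (auto split: op.splits)
qed

lemma step_transfer:
  assumes wf: "ocapt_wf A" and st: "step A V (q, c) (q', c')"
    and "int d' - int d = int c' - int c" and "c = 0 \<longleftrightarrow> d = 0"
    and "\<forall>x\<in>Par A. (c = V x \<longleftrightarrow> d = W x) \<and> (V x \<le> c \<longleftrightarrow> W x \<le> d)"
  shows "step A W (q, d) (q', d')"
proof -
  have tr: "(q, q') \<in> Tr A" using st by (simp add: step_def)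
  then have "op_wf (Par A) (Lab A (q, q'))" using wf by (auto simp: ocapt_wf_def)
  then show ?thesis using assms(2-5) tr unfolding step_def op_wf_def
    by (auto split: op.splits)
qed

definition avoiding_run ::
  "ocapt \<Rightarrow> (nat \<Rightarrow> nat) \<Rightarrow> nat set \<Rightarrow> (nat \<Rightarrow> nat \<times> nat) \<Rightarrow> nat \<Rightarrow> bool" where
  "avoiding_run A V F \<rho> L \<longleftrightarrow> (\<forall>t<L. step A V (\<rho> t) (\<rho> (Suc t))) \<and> (\<forall>t\<le>L. fst (\<rho> t) \<notin> F)"

definition avoiding_path ::
  "ocapt \<Rightarrow> (nat \<Rightarrow> nat) \<Rightarrow> nat set \<Rightarrow> nat \<Rightarrow> nat \<times> nat \<Rightarrow> nat \<times> nat \<Rightarrow> bool" where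
  "avoiding_path A V F L cf cf' \<longleftrightarrow> (\<exists>\<rho>. \<rho> 0 = cf \<and> \<rho> L = cf' \<and> avoiding_run A V F \<rho> L)"

lemma avoiding_run_take: "avoiding_run A V F \<rho> L \<Longrightarrow> e \<le> L \<Longrightarrow> avoiding_run A V F \<rho> e"
  unfolding avoiding_run_def by auto

lemma avoiding_run_drop:
  "avoiding_run A V F \<rho> L \<Longrightarrow> e \<le> L \<Longrightarrow> avoiding_run A V F (\<lambda>t. \<rho> (t + e)) (L - e)"
  unfolding avoiding_run_def by auto

lemma avoiding_path_append:
  assumes "avoiding_path A V F L1 cf cf'" "avoiding_path A V F L2 cf' cf''"
  shows "avoiding_path A V F (L1 + L2) cf cf''"
proof -
  obtain \<sigma>1 \<sigma>2 where \<sigma>1: "\<sigma>1 0 = cf" "\<sigma>1 L1 = cf'" "avoiding_run A V F \<sigma>1 L1"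
    and \<sigma>2: "\<sigma>2 0 = cf'" "\<sigma>2 L2 = cf''" "avoiding_run A V F \<sigma>2 L2"
    using assms unfolding avoiding_path_def by blast
  define \<sigma> where "\<sigma> t = (if t \<le> L1 then \<sigma>1 t else \<sigma>2 (t - L1))" for t
  have "step A V (\<sigma> t) (\<sigma> (Suc t))" if "t < L1 + L2" for t
  proof (cases "t < L1")
    case True then show ?thesis using \<sigma>1(3) by (simp add: \<sigma>_def avoiding_run_def)
  next
    case False
    then have "\<sigma> t = \<sigma>2 (t - L1)" "\<sigma> (Suc t) = \<sigma>2 (Suc (t - L1))" "t - L1 < L2"
      using that \<sigma>1(2) \<sigma>2(1) by (auto simp: \<sigma>_def Suc_diff_le)
    then show ?thesis using \<sigma>2(3) by (simp add: avoiding_run_def)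
  qed
  moreover have "fst (\<sigma> t) \<notin> F" if "t \<le> L1 + L2" for t
    using that \<sigma>1(3) \<sigma>2(3) by (auto simp: \<sigma>_def avoiding_run_def)
  ultimately show ?thesis
    using \<sigma>1(1) \<sigma>2(2) \<sigma>1(2) \<sigma>2(1) unfolding avoiding_path_def avoiding_run_def
    by (intro exI[of _ \<sigma>]) (auto simp: \<sigma>_def)
qed

lemma avoiding_path_iterate:
  assumes "fst (f 0) \<notin> F" and "\<forall>k<m. avoiding_path A V F P (f k) (f (Suc k))"
  shows "avoiding_path A V F (m * P) (f 0) (f m)"
  using assms(2)
proof (induction m)
  case 0
  show ?case
    using assms(1) unfolding avoiding_path_def avoiding_run_def by (intro exI[of _ "\<lambda>_. f 0"]) simp
next
  case (Suc m)
  then have "avoiding_path A V F (m * P) (f 0) (f m)" "avoiding_path A V F P (f m) (f (Suc m))"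
    by simp_all
  then have "avoiding_path A V F (m * P + P) (f 0) (f (Suc m))"
    by (rule avoiding_path_append)
  then show ?case by (simp add: algebra_simps)
qed

lemma finite_successors:
  assumes "ocapt_wf A"
  shows "finite {cf'. step A V cf cf'}"
proof -
  have "cf' \<in> St A \<times> {0..snd cf + 1}" if "step A V cf cf'" for cf'
    using step_counter_bound[OF assms that] assms by (cases cf') (auto simp: ocapt_wf_def)
  then have "{cf'. step A V cf cf'} \<subseteq> St A \<times> {0..snd cf + 1}" by blast
  moreover have "finite (St A)" using assms by (simp add: ocapt_wf_def)
  ultimately show ?thesis by (meson finite_SigmaI finite_atLeastAtMost finite_subset)
qed

lemma infinite_avoiding_run:
  assumes wf: "ocapt_wf A" and long: "\<forall>L. \<exists>\<rho>. \<rho> 0 = cf0 \<and> avoiding_run A V F \<rho> L"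
  shows "\<exists>\<rho>. inf_run A V cf0 \<rho> \<and> \<not> reaches F \<rho>"
proof -
  define G where "G = {cf. \<forall>L. \<exists>\<rho>. \<rho> 0 = cf \<and> avoiding_run A V F \<rho> L}"
  have succ: "\<exists>cf'. step A V cf cf' \<and> cf' \<in> G" if cf: "cf \<in> G" for cf
  proof (rule ccontr)
    define S where "S = {cf'. step A V cf cf'}"
    assume "\<nexists>cf'. step A V cf cf' \<and> cf' \<in> G"
    then have "\<forall>s\<in>S. \<exists>L. \<nexists>\<rho>. \<rho> 0 = s \<and> avoiding_run A V F \<rho> L"
      unfolding S_def G_def by blast
    then obtain f where f: "\<forall>s\<in>S. \<nexists>\<rho>. \<rho> 0 = s \<and> avoiding_run A V F \<rho> (f s)"
      by metis
    obtain \<rho> where \<rho>: "\<rho> 0 = cf" "avoiding_run A V F \<rho> (Suc (\<Sum>s\<in>S. f s))"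
      using cf unfolding G_def by blast
    have "\<rho> 1 \<in> S" using \<rho> unfolding avoiding_run_def S_def by auto
    moreover have "f (\<rho> 1) \<le> (\<Sum>s\<in>S. f s)"
      using \<open>\<rho> 1 \<in> S\<close> finite_successors[OF wf] by (simp add: S_def member_le_sum)
    moreover have "avoiding_run A V F (\<lambda>t. \<rho> (t + 1)) (\<Sum>s\<in>S. f s)"
      using avoiding_run_drop[OF \<rho>(2), of 1] by simp
    ultimately have "avoiding_run A V F (\<lambda>t. \<rho> (t + 1)) (f (\<rho> 1))"
      using avoiding_run_take by blast
    then show False using f \<open>\<rho> 1 \<in> S\<close> by fastforce
  qed
  define next_cf where "next_cf cf = (SOME cf'. step A V cf cf' \<and> cf' \<in> G)" for cf
  have next_cf: "step A V cf (next_cf cf) \<and> next_cf cf \<in> G" if "cf \<in> G" for cf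
    unfolding next_cf_def using someI_ex[OF succ[OF that]] .
  define \<rho> where "\<rho> t = (next_cf ^^ t) cf0" for t
  have inG: "\<rho> t \<in> G" for t
  proof (induction t)
    case 0 then show ?case using long by (simp add: \<rho>_def G_def)
  next
    case (Suc t) then show ?case using next_cf by (simp add: \<rho>_def)
  qed
  have "inf_run A V cf0 \<rho>"
    using next_cf[OF inG] by (simp add: inf_run_def \<rho>_def)
  moreover have "fst (\<rho> t) \<notin> F" for t
  proof -
    obtain \<sigma> where "\<sigma> 0 = \<rho> t" "avoiding_run A V F \<sigma> 0" using inG[of t] unfolding G_def by blast
    then show ?thesis by (simp add: avoiding_run_def)
  qed
  ultimately show ?thesis unfolding reaches_def by blast
qed

lemma all_inf_runs_reach_iff_bounded:
  assumes "ocapt_wf A"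
  shows "all_inf_runs_reach A V q0 F \<longleftrightarrow> (\<exists>L. \<nexists>\<rho>. \<rho> 0 = (q0, 0) \<and> avoiding_run A V F \<rho> L)"
proof
  assume "all_inf_runs_reach A V q0 F"
  then show "\<exists>L. \<nexists>\<rho>. \<rho> 0 = (q0, 0) \<and> avoiding_run A V F \<rho> L"
    using infinite_avoiding_run[OF assms] unfolding all_inf_runs_reach_def by blast
next
  assume "\<exists>L. \<nexists>\<rho>. \<rho> 0 = (q0, 0) \<and> avoiding_run A V F \<rho> L"
  then obtain L where L: "\<nexists>\<rho>. \<rho> 0 = (q0, 0) \<and> avoiding_run A V F \<rho> L" by blast
  show "all_inf_runs_reach A V q0 F" unfolding all_inf_runs_reach_def
  proof (intro allI impI)
    fix \<rho> assume run: "inf_run A V (q0, 0) \<rho>"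
    show "reaches F \<rho>"
    proof (rule ccontr)
      assume "\<not> reaches F \<rho>"
      then have "avoiding_run A V F \<rho> L"
        using run by (simp add: avoiding_run_def inf_run_def reaches_def)
      then show False using L run by (simp add: inf_run_def)
    qed
  qed
qed

lemma avoiding_run_slope:
  assumes wf: "ocapt_wf A" and "avoiding_run A V F \<rho> e"
  shows "\<forall>t<e. \<bar>int (snd (\<rho> (Suc t))) - int (snd (\<rho> t))\<bar> \<le> 1"
  using assms(2) step_counter_bound[OF wf] unfolding avoiding_run_def by blast

lemma avoiding_run_states:
  assumes wf: "ocapt_wf A" and "avoiding_run A V F \<rho> e"
  shows "\<forall>t. 0 < t \<longrightarrow> t \<le> e \<longrightarrow> fst (\<rho> t) \<in> St A"
proof (intro allI impI)
  fix t assume t: "0 < t" "t \<le> e"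
  then have "step A V (\<rho> (t - 1)) (\<rho> t)"
    using assms(2) by (auto simp: avoiding_run_def elim!: allE[of _ "t - 1"])
  then have "(fst (\<rho> (t - 1)), fst (\<rho> t)) \<in> Tr A" using step_counter_bound[OF wf] by blast
  then show "fst (\<rho> t) \<in> St A" using wf by (auto simp: ocapt_wf_def)
qed

text \<open>The first visits of the card S + 1 levels just above lo occur in increasing order, so
  two of them are in the same state.\<close>
lemma level_crossing_repeats_state:
  fixes c :: "nat \<Rightarrow> int" and s :: "nat \<Rightarrow> 'q"
  assumes slope: "\<forall>t<e. \<bar>c (Suc t) - c t\<bar> \<le> 1"
    and start: "c 0 \<le> lo" and finish: "lo + int (card S) < c e"
    and S: "finite S" "\<forall>t. 0 < t \<longrightarrow> t \<le> e \<longrightarrow> s t \<in> S"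
  shows "\<exists>i j. 0 < i \<and> i < j \<and> j \<le> e \<and> s i = s j \<and> 0 < c j - c i \<and> c j - c i \<le> int (card S)"
proof -
  define levels where "levels = {lo<..lo + int (card S) + 1}"
  define first where "first l = (LEAST t. c t = l)" for l
  have first: "c (first l) = l \<and> first l \<le> T" if T: "T \<le> e" "c 0 \<le> l" "l \<le> c T" for T l
  proof -
    obtain t where t: "t \<le> T" "c t = l"
      using nat0_intermed_int_val[of T c l] slope T by auto
    have "c (first l) = l" unfolding first_def using t(2) by (rule LeastI)
    moreover have "first l \<le> t" unfolding first_def using t(2) by (rule Least_le)
    ultimately show ?thesis using t(1) by simp
  qed
  have first_level: "c (first l) = l" "0 < first l" "first l \<le> e" if "l \<in> levels" for l
  proof -
    have "lo < l" "l \<le> c e" using that finish by (auto simp: levels_def)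
    then have "c (first l) = l" "first l \<le> e" using first[of e l] start by auto
    moreover have "first l \<noteq> 0"
    proof
      assume "first l = 0"
      then show False using \<open>c (first l) = l\<close> \<open>lo < l\<close> start by simp
    qed
    ultimately show "c (first l) = l" "0 < first l" "first l \<le> e" by auto
  qed
  have first_mono: "first l < first l'" if "l \<in> levels" "l' \<in> levels" "l < l'" for l l'
  proof -
    have "c 0 \<le> l" "l \<le> c (first l')"
      using first_level(1)[OF that(2)] that start by (auto simp: levels_def)
    then have "first l \<le> first l'" using first[of "first l'" l] first_level(3)[OF that(2)] by blast
    moreover have "first l \<noteq> first l'"
      using first_level(1)[OF that(1)] first_level(1)[OF that(2)] that(3) by auto
    ultimately show ?thesis by simp
  qed
  have "\<not> inj_on (s \<circ> first) levels"
  proof (rule pigeonhole)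
    have "(s \<circ> first) ` levels \<subseteq> S" using S(2) first_level(2,3) by auto
    then have "card ((s \<circ> first) ` levels) \<le> card S" using S(1) by (simp add: card_mono)
    then show "card ((s \<circ> first) ` levels) < card levels" by (simp add: levels_def)
  qed
  then obtain l l' where l: "l \<in> levels" "l' \<in> levels" "l < l'" "s (first l) = s (first l')"
    using linorder_inj_onI'[of levels "s \<circ> first"] by auto
  show ?thesis
  proof (intro exI conjI)
    show "0 < first l" "first l < first l'" "first l' \<le> e" "s (first l) = s (first l')"
      using first_level(2)[OF l(1)] first_level(3)[OF l(2)] first_mono[OF l(1-3)] l(4) by auto
    show "0 < c (first l') - c (first l)" "c (first l') - c (first l) \<le> int (card S)"
      using first_level(1)[OF l(1)] first_level(1)[OF l(2)] l(1-3) by (auto simp: levels_def)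
  qed
qed

lemma add_mult_between:
  fixes z \<delta> u :: int
  assumes "0 \<le> z" "z \<le> u" "0 \<le> z + int m * \<delta>" "z + int m * \<delta> \<le> u" "k \<le> m"
  shows "0 \<le> z + int k * \<delta> \<and> z + int k * \<delta> \<le> u"
proof (cases "0 \<le> \<delta>")
  case True
  then have "0 \<le> int k * \<delta>" "int k * \<delta> \<le> int m * \<delta>" using assms(5) by (simp_all add: mult_right_mono)
  then show ?thesis using assms by linarith
next
  case False
  then have "int k * \<delta> \<le> 0" "int m * \<delta> \<le> int k * \<delta>"
    using assms(5) by (simp_all add: mult_nonneg_nonpos mult_right_mono_neg)
  then show ?thesis using assms by linarith
qed

definition stretch :: "nat \<Rightarrow> nat \<Rightarrow> nat \<Rightarrow> nat" where
  "stretch b D c = (if b \<le> c then c + D else c)"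

definition shift_counter :: "int \<Rightarrow> nat \<times> nat \<Rightarrow> nat \<times> nat" where
  "shift_counter z cf = (fst cf, nat (int (snd cf) + z))"

locale valuation_gap =
  fixes A :: ocapt and V W :: "nat \<Rightarrow> nat" and a b D :: nat
  assumes wf: "ocapt_wf A"
    and wide: "a + card (St A) + 2 \<le> b"
    and no_param_in_gap: "\<forall>x\<in>Par A. V x \<le> a \<or> b \<le> V x"
    and W_stretch: "\<forall>x\<in>Par A. W x = stretch b D (V x)"
    and short_cycles_dvd: "\<forall>d. 0 < d \<and> d \<le> card (St A) \<longrightarrow> d dvd D"
begin

definition in_gap :: "nat \<Rightarrow> bool" where
  "in_gap c \<longleftrightarrow> a < c \<and> c < b"

definition gap_shift :: "nat \<Rightarrow> int" where
  "gap_shift c = (if b \<le> c then int D else 0)"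

text \<open>No test distinguishes counter values inside the gap, so there a run may be shifted by
  any amount in [0, D]; outside the gap the shift must be the one realising stretch.\<close>
definition shift_ok :: "nat \<Rightarrow> int \<Rightarrow> bool" where
  "shift_ok c z \<longleftrightarrow> (if in_gap c then 0 \<le> z \<and> z \<le> int D else z = gap_shift c)"

definition lift :: "nat \<times> nat \<Rightarrow> nat \<times> nat" where
  "lift cf = (fst cf, stretch b D (snd cf))"

lemma lift_eq_shift_counter: "\<not> in_gap (snd cf) \<Longrightarrow> lift cf = shift_counter (gap_shift (snd cf)) cf"
  by (auto simp: lift_def shift_counter_def gap_shift_def stretch_def)

lemma step_shift_counter:
  assumes st: "step A V cf cf'" and ok: "shift_ok (snd cf) z"
  shows "step A W (shift_counter z cf) (shift_counter z cf')"
proof -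
  obtain q c q' c' where cf: "cf = (q, c)" "cf' = (q', c')" by fastforce
  have "0 \<le> z" using ok wide by (auto simp: shift_ok_def gap_shift_def split: if_splits)
  then have shifted: "nat (int c + z) = c + nat z" "nat (int c' + z) = c' + nat z" by auto
  have "step A W (q, c + nat z) (q', c' + nat z)"
  proof (rule step_transfer[OF wf])
    show "step A V (q, c) (q', c')" using st cf by simp
    show "int (c' + nat z) - int (c + nat z) = int c' - int c" by simp
    show "c = 0 \<longleftrightarrow> c + nat z = 0"
      using ok wide by (auto simp: shift_ok_def in_gap_def gap_shift_def cf)
    show "\<forall>x\<in>Par A. (c = V x \<longleftrightarrow> c + nat z = W x) \<and> (V x \<le> c \<longleftrightarrow> W x \<le> c + nat z)"
      using ok no_param_in_gap W_stretch \<open>0 \<le> z\<close>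
      by (auto simp: shift_ok_def in_gap_def gap_shift_def stretch_def cf split: if_splits)
  qed
  then show ?thesis using cf shifted by (simp add: shift_counter_def)
qed

lemma avoiding_path_shift_counter:
  assumes run: "avoiding_run A V F \<rho> L" and "i \<le> j" "j \<le> L"
    and ok: "\<forall>t. i \<le> t \<longrightarrow> t < j \<longrightarrow> shift_ok (snd (\<rho> t)) z"
  shows "avoiding_path A W F (j - i) (shift_counter z (\<rho> i)) (shift_counter z (\<rho> j))"
  unfolding avoiding_path_def
proof (intro exI conjI)
  let ?\<sigma> = "\<lambda>t. shift_counter z (\<rho> (t + i))"
  show "?\<sigma> 0 = shift_counter z (\<rho> i)" "?\<sigma> (j - i) = shift_counter z (\<rho> j)"
    using \<open>i \<le> j\<close> by simp_all
  show "avoiding_run A W F ?\<sigma> (j - i)"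
    using run ok \<open>i \<le> j\<close> \<open>j \<le> L\<close> step_shift_counter
    by (auto simp: avoiding_run_def shift_counter_def)
qed

lemma avoiding_path_pump:
  assumes run: "avoiding_run A V F \<rho> L" and "i \<le> j" "j \<le> L" and same_state: "fst (\<rho> i) = fst (\<rho> j)"
    and ok: "\<forall>k<m. \<forall>t. i \<le> t \<longrightarrow> t < j \<longrightarrow> shift_ok (snd (\<rho> t)) (z + int k * \<delta>)"
    and \<delta>: "\<delta> = int (snd (\<rho> j)) - int (snd (\<rho> i))"
  shows "avoiding_path A W F (m * (j - i)) (shift_counter z (\<rho> i)) (shift_counter (z + int m * \<delta>) (\<rho> i))"
proof -
  define f where "f k = shift_counter (z + int k * \<delta>) (\<rho> i)" for k
  have "avoiding_path A W F (j - i) (f k) (f (Suc k))" if "k < m" for k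
  proof -
    have "avoiding_path A W F (j - i) (f k) (shift_counter (z + int k * \<delta>) (\<rho> j))"
      unfolding f_def using assms(2,3) ok that by (intro avoiding_path_shift_counter[OF run]) auto
    moreover have "shift_counter (z + int k * \<delta>) (\<rho> j) = f (Suc k)"
      using same_state by (simp add: f_def shift_counter_def \<delta> algebra_simps)
    ultimately show ?thesis by simp
  qed
  moreover have "fst (f 0) \<notin> F"
    using run \<open>i \<le> j\<close> \<open>j \<le> L\<close> by (simp add: f_def shift_counter_def avoiding_run_def)
  ultimately show ?thesis using avoiding_path_iterate[of f F m A W "j - i"] by (simp add: f_def)
qed

lemma gap_crossing_cycle:
  assumes run: "avoiding_run A V F \<rho> e"
    and cross: "(snd (\<rho> 0) \<le> a \<and> b \<le> snd (\<rho> e)) \<or> (b \<le> snd (\<rho> 0) \<and> snd (\<rho> e) \<le> a)"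
  obtains i j m where "0 < i" "i < j" "j \<le> e" "fst (\<rho> i) = fst (\<rho> j)"
    "gap_shift (snd (\<rho> 0)) + int m * (int (snd (\<rho> j)) - int (snd (\<rho> i))) = gap_shift (snd (\<rho> e))"
proof -
  define c where "c t = int (snd (\<rho> t))" for t
  define n where "n = card (St A)"
  have fin: "finite (St A)" using wf by (simp add: ocapt_wf_def)
  have states: "\<forall>t. 0 < t \<longrightarrow> t \<le> e \<longrightarrow> fst (\<rho> t) \<in> St A"
    using avoiding_run_states[OF wf run] .
  have cycle_multiple: "\<exists>m. int m * \<delta> = int D" if "0 < \<delta>" "\<delta> \<le> int n" for \<delta>
  proof -
    have "nat \<delta> dvd D" using short_cycles_dvd that by (auto simp: n_def)
    then obtain m where "D = nat \<delta> * m" by (elim dvdE)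
    then show ?thesis using that by (intro exI[of _ m]) (simp add: algebra_simps)
  qed
  from cross show ?thesis
  proof
    assume up: "snd (\<rho> 0) \<le> a \<and> b \<le> snd (\<rho> e)"
    have "\<forall>t<e. \<bar>c (Suc t) - c t\<bar> \<le> 1" using avoiding_run_slope[OF wf run] by (simp add: c_def)
    moreover have "c 0 \<le> int a" "int a + int n < c e" using up wide by (auto simp: c_def n_def)
    ultimately obtain i j where ij: "0 < i" "i < j" "j \<le> e" "fst (\<rho> i) = fst (\<rho> j)"
      "0 < c j - c i" "c j - c i \<le> int n"
      using level_crossing_repeats_state[of e c "int a" "St A" "\<lambda>t. fst (\<rho> t)"] fin states
      by (auto simp: n_def)
    obtain m where "int m * (c j - c i) = int D" using cycle_multiple ij(5,6) by blast
    then show ?thesis using that[OF ij(1-4), of m] up wide by (simp add: c_def gap_shift_def)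
  next
    assume down: "b \<le> snd (\<rho> 0) \<and> snd (\<rho> e) \<le> a"
    have "\<forall>t<e. \<bar>- c (Suc t) - - c t\<bar> \<le> 1"
      using avoiding_run_slope[OF wf run] by (simp add: c_def abs_minus_commute)
    moreover have "- c 0 \<le> - int b" "- int b + int n < - c e" using down wide by (auto simp: c_def n_def)
    ultimately obtain i j where ij: "0 < i" "i < j" "j \<le> e" "fst (\<rho> i) = fst (\<rho> j)"
      "0 < c i - c j" "c i - c j \<le> int n"
      using level_crossing_repeats_state[of e "\<lambda>t. - c t" "- int b" "St A" "\<lambda>t. fst (\<rho> t)"] fin states
      by (auto simp: n_def)
    obtain m where "int m * (c i - c j) = int D" using cycle_multiple ij(5,6) by blast
    then show ?thesis using that[OF ij(1-4), of m] down wide by (simp add: c_def gap_shift_def algebra_simps)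
  qed
qed

lemma gap_crossing_lift:
  assumes run: "avoiding_run A V F \<rho> e"
    and inside: "\<forall>t. 0 < t \<longrightarrow> t < e \<longrightarrow> in_gap (snd (\<rho> t))"
    and cross: "(snd (\<rho> 0) \<le> a \<and> b \<le> snd (\<rho> e)) \<or> (b \<le> snd (\<rho> 0) \<and> snd (\<rho> e) \<le> a)"
  shows "\<exists>e'\<ge>e. avoiding_path A W F e' (lift (\<rho> 0)) (lift (\<rho> e))"
proof -
  define z0 where "z0 = gap_shift (snd (\<rho> 0))"
  define z1 where "z1 = gap_shift (snd (\<rho> e))"
  obtain i j m where ij: "0 < i" "i < j" "j \<le> e" "fst (\<rho> i) = fst (\<rho> j)"
    and pumped: "z0 + int m * (int (snd (\<rho> j)) - int (snd (\<rho> i))) = z1"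
    using gap_crossing_cycle[OF run cross] unfolding z0_def z1_def by blast
  define \<delta> where "\<delta> = int (snd (\<rho> j)) - int (snd (\<rho> i))"
  have ends: "\<not> in_gap (snd (\<rho> 0))" "\<not> in_gap (snd (\<rho> e))"
    using cross wide by (auto simp: in_gap_def)
  have "0 \<le> z0 + int k * \<delta> \<and> z0 + int k * \<delta> \<le> int D" if "k \<le> m" for k
  proof (rule add_mult_between[OF _ _ _ _ that])
    show "0 \<le> z0" "z0 \<le> int D" "0 \<le> z0 + int m * \<delta>" "z0 + int m * \<delta> \<le> int D"
      using pumped by (simp_all add: z0_def z1_def \<delta>_def gap_shift_def)
  qed
  then have ok_inside: "shift_ok (snd (\<rho> t)) (z0 + int k * \<delta>)" if "0 < t" "t < e" "k \<le> m" for t k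
    using inside that by (simp add: shift_ok_def)
  have "shift_ok (snd (\<rho> t)) z0" if "t < i" for t
    using ends(1) ok_inside[of t 0] that ij by (cases "t = 0") (auto simp: shift_ok_def z0_def)
  then have "avoiding_path A W F (i - 0) (shift_counter z0 (\<rho> 0)) (shift_counter z0 (\<rho> i))"
    using ij by (intro avoiding_path_shift_counter[OF run]) auto
  then have "avoiding_path A W F i (lift (\<rho> 0)) (shift_counter z0 (\<rho> i))"
    using lift_eq_shift_counter[OF ends(1)] by (simp add: z0_def)
  moreover have "avoiding_path A W F (m * (j - i)) (shift_counter z0 (\<rho> i)) (shift_counter z1 (\<rho> i))"
    using avoiding_path_pump[OF run _ _ ij(4) _ \<delta>_def] ij ok_inside pumped by (auto simp: \<delta>_def)
  moreover have "avoiding_path A W F (e - i) (shift_counter z1 (\<rho> i)) (shift_counter z1 (\<rho> e))"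
  proof (rule avoiding_path_shift_counter[OF run])
    show "\<forall>t. i \<le> t \<longrightarrow> t < e \<longrightarrow> shift_ok (snd (\<rho> t)) z1"
      using ok_inside[of _ m] ij pumped by (auto simp: \<delta>_def)
  qed (use ij in auto)
  then have "avoiding_path A W F (e - i) (shift_counter z1 (\<rho> i)) (lift (\<rho> e))"
    using lift_eq_shift_counter[OF ends(2)] by (simp add: z1_def)
  ultimately have "avoiding_path A W F (i + m * (j - i) + (e - i)) (lift (\<rho> 0)) (lift (\<rho> e))"
    by (intro avoiding_path_append)
  then show ?thesis by (intro exI[of _ "i + m * (j - i) + (e - i)"]) simp
qed

lemma gap_excursion_lift:
  assumes run: "avoiding_run A V F \<rho> e"
    and ends: "\<not> in_gap (snd (\<rho> 0))" "\<not> in_gap (snd (\<rho> e))"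
    and inside: "\<forall>t. 0 < t \<longrightarrow> t < e \<longrightarrow> in_gap (snd (\<rho> t))"
  shows "\<exists>e'\<ge>e. avoiding_path A W F e' (lift (\<rho> 0)) (lift (\<rho> e))"
proof (cases "gap_shift (snd (\<rho> 0)) = gap_shift (snd (\<rho> e))")
  case True
  have "shift_ok (snd (\<rho> t)) (gap_shift (snd (\<rho> 0)))" if "t < e" for t
    using ends(1) inside that by (cases "t = 0") (auto simp: shift_ok_def gap_shift_def)
  then have "avoiding_path A W F (e - 0) (lift (\<rho> 0)) (lift (\<rho> e))"
    using avoiding_path_shift_counter[OF run, of 0 e] lift_eq_shift_counter ends True by simp
  then show ?thesis by auto
next
  case False
  then have "(snd (\<rho> 0) \<le> a \<and> b \<le> snd (\<rho> e)) \<or> (b \<le> snd (\<rho> 0) \<and> snd (\<rho> e) \<le> a)"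
    using ends by (auto simp: in_gap_def gap_shift_def split: if_splits)
  then show ?thesis using gap_crossing_lift[OF run inside] by blast
qed

lemma avoiding_run_lift:
  assumes "avoiding_run A V F \<rho> L" "\<not> in_gap (snd (\<rho> 0))"
  shows "\<exists>L'\<ge>L. \<exists>cf. avoiding_path A W F L' (lift (\<rho> 0)) cf"
  using assms
proof (induction L arbitrary: \<rho> rule: less_induct)
  case (less L \<rho>)
  show ?case
  proof (cases "\<exists>t. 0 < t \<and> t \<le> L \<and> \<not> in_gap (snd (\<rho> t))")
    case True
    define e where "e = (LEAST t. 0 < t \<and> t \<le> L \<and> \<not> in_gap (snd (\<rho> t)))"
    have e: "0 < e" "e \<le> L" "\<not> in_gap (snd (\<rho> e))"
      using LeastI_ex[OF True] by (simp_all add: e_def)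
    have inside: "\<forall>t. 0 < t \<longrightarrow> t < e \<longrightarrow> in_gap (snd (\<rho> t))"
      using not_less_Least e(2) by (fastforce simp: e_def)
    obtain e1 where e1: "e \<le> e1" "avoiding_path A W F e1 (lift (\<rho> 0)) (lift (\<rho> e))"
      using gap_excursion_lift[OF avoiding_run_take[OF less.prems(1) e(2)] less.prems(2) e(3) inside]
      by blast
    obtain L2 cf where L2: "L - e \<le> L2" "avoiding_path A W F L2 (lift (\<rho> e)) cf"
      using less.IH[of "L - e" "\<lambda>t. \<rho> (t + e)"] avoiding_run_drop[OF less.prems(1) e(2)] e by auto
    have "avoiding_path A W F (e1 + L2) (lift (\<rho> 0)) cf"
      using e1(2) L2(2) by (rule avoiding_path_append)
    moreover have "L \<le> e1 + L2" using e1(1) L2(1) by simp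
    ultimately show ?thesis by blast
  next
    case False
    then have "in_gap (snd (\<rho> t))" if "0 < t" "t < L" for t using that less_imp_le by blast
    then have "shift_ok (snd (\<rho> t)) (gap_shift (snd (\<rho> 0)))" if "t < L" for t
      using less.prems(2) that by (cases "t = 0") (auto simp: shift_ok_def gap_shift_def)
    then have "avoiding_path A W F (L - 0) (lift (\<rho> 0)) (shift_counter (gap_shift (snd (\<rho> 0))) (\<rho> L))"
      using avoiding_path_shift_counter[OF less.prems(1), of 0 L] lift_eq_shift_counter less.prems(2)
      by simp
    then show ?thesis by (metis diff_zero order_refl)
  qed
qed

lemma stretched_avoiding_run:
  assumes "avoiding_run A V F \<rho> L" "\<rho> 0 = (q0, 0)"
  shows "\<exists>\<sigma>. \<sigma> 0 = (q0, 0) \<and> avoiding_run A W F \<sigma> L"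
proof -
  have "\<not> in_gap 0" "lift (q0, 0) = (q0, 0)" using wide by (simp_all add: in_gap_def lift_def stretch_def)
  then obtain L' \<sigma> where "L \<le> L'" "\<sigma> 0 = (q0, 0)" "avoiding_run A W F \<sigma> L'"
    using avoiding_run_lift[OF assms(1)] assms(2) unfolding avoiding_path_def by auto
  then show ?thesis using avoiding_run_take by blast
qed

lemma all_inf_runs_reach_unstretch:
  assumes "all_inf_runs_reach A W q0 F"
  shows "all_inf_runs_reach A V q0 F"
  using assms stretched_avoiding_run all_inf_runs_reach_iff_bounded[OF wf] by metis

end

lemma le_gap_mult_card_less:
  fixes M :: "nat set"
  assumes fin: "finite M" and zero: "0 \<in> M"
    and gaps: "\<forall>x\<in>M. \<forall>y\<in>M. x < y \<and> (\<forall>z\<in>M. z \<le> x \<or> y \<le> z) \<longrightarrow> y - x \<le> K"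
  shows "m \<in> M \<Longrightarrow> m \<le> K * card {y\<in>M. y < m}"
proof (induction m rule: less_induct)
  case (less m)
  show ?case
  proof (cases "m = 0")
    case False
    define below where "below = {y\<in>M. y < m}"
    have "finite below" "below \<noteq> {}" using fin zero False by (auto simp: below_def)
    define m' where "m' = Max below"
    have m': "m' \<in> M" "m' < m" using Max_in[OF \<open>finite below\<close> \<open>below \<noteq> {}\<close>] by (auto simp: m'_def below_def)
    have "\<forall>z\<in>M. z \<le> m' \<or> m \<le> z"
      using Max_ge[OF \<open>finite below\<close>] by (force simp: m'_def below_def)
    then have "m - m' \<le> K" using gaps m' less.prems by blast
    moreover have "m' \<le> K * card {y\<in>M. y < m'}" using less.IH m' by blast
    moreover have "card {y\<in>M. y < m'} < card below"
      using m' \<open>finite below\<close> by (intro psubset_card_mono) (auto simp: below_def)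
    then have "K * (card {y\<in>M. y < m'} + 1) \<le> K * card below" by (intro mult_le_mono2) simp
    ultimately show ?thesis by (simp add: below_def algebra_simps)
  qed simp
qed

lemma shrink_wide_gap:
  assumes wf: "ocapt_wf A" and reach: "all_inf_runs_reach A V q0 F"
    and b: "b \<in> V ` Par A" and no_param: "\<forall>x\<in>Par A. V x \<le> a \<or> b \<le> V x"
    and wide: "a + fact (card (St A)) + card (St A) + 2 < b"
  shows "\<exists>V'. (\<Sum>x\<in>Par A. V' x) < (\<Sum>x\<in>Par A. V x) \<and> all_inf_runs_reach A V' q0 F"
proof -
  define D :: nat where "D = fact (card (St A))"
  define V' where "V' x = (if b \<le> V x then V x - D else V x)" for x
  interpret valuation_gap A V' V a "b - D" D
  proof
    show "ocapt_wf A" by (rule wf)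
    show "a + card (St A) + 2 \<le> b - D" using wide by (simp add: D_def)
    show "\<forall>x\<in>Par A. V' x \<le> a \<or> b - D \<le> V' x" using no_param by (auto simp: V'_def)
    show "\<forall>x\<in>Par A. V x = stretch (b - D) D (V' x)"
      using no_param wide by (auto simp: V'_def D_def stretch_def)
    show "\<forall>d. 0 < d \<and> d \<le> card (St A) \<longrightarrow> d dvd D" by (simp add: D_def dvd_fact)
  qed
  have "(\<Sum>x\<in>Par A. V' x) < (\<Sum>x\<in>Par A. V x)"
  proof (rule sum_strict_mono_ex1)
    show "finite (Par A)" using wf by (simp add: ocapt_wf_def)
    show "\<forall>x\<in>Par A. V' x \<le> V x" by (simp add: V'_def)
    show "\<exists>x\<in>Par A. V' x < V x" using b wide by (auto simp: V'_def D_def)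
  qed
  then show ?thesis using all_inf_runs_reach_unstretch[OF reach] by blast
qed

lemma small_valuation_exists:
  assumes wf: "ocapt_wf A" and "all_inf_runs_reach A V q0 F"
  shows "\<exists>V'. (\<forall>x\<in>Par A. V' x \<le> (fact (card (St A)) + card (St A) + 2) * (card (Par A) + 1))
    \<and> all_inf_runs_reach A V' q0 F"
  using assms(2)
proof (induction "\<Sum>x\<in>Par A. V x" arbitrary: V rule: less_induct)
  case less
  define K where "K = fact (card (St A)) + card (St A) + 2"
  define M where "M = insert 0 (V ` Par A)"
  have "finite (Par A)" using wf by (simp add: ocapt_wf_def)
  show ?case
  proof (cases "\<forall>x\<in>M. \<forall>y\<in>M. x < y \<and> (\<forall>z\<in>M. z \<le> x \<or> y \<le> z) \<longrightarrow> y - x \<le> K")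
    case True
    have "V x \<le> K * (card (Par A) + 1)" if "x \<in> Par A" for x
    proof -
      have "V x \<le> K * card {y\<in>M. y < V x}"
        using le_gap_mult_card_less[OF _ _ True] \<open>finite (Par A)\<close> that by (simp add: M_def)
      also have "\<dots> \<le> K * card M" using \<open>finite (Par A)\<close> by (intro mult_le_mono2 card_mono) (auto simp: M_def)
      also have "\<dots> \<le> K * (card (Par A) + 1)"
        using card_image_le[OF \<open>finite (Par A)\<close>, of V] \<open>finite (Par A)\<close>
        by (intro mult_le_mono2) (simp add: M_def card_insert_if)
      finally show ?thesis .
    qed
    then show ?thesis using less.prems by (auto simp: K_def)
  next
    case False
    then obtain a b where "a \<in> M" "b \<in> M" "a < b" "\<forall>z\<in>M. z \<le> a \<or> b \<le> z" "K < b - a"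
      by (meson not_le)
    then have "b \<in> V ` Par A" "\<forall>x\<in>Par A. V x \<le> a \<or> b \<le> V x"
      "a + fact (card (St A)) + card (St A) + 2 < b"
      by (auto simp: M_def K_def)
    then obtain V' where "(\<Sum>x\<in>Par A. V' x) < (\<Sum>x\<in>Par A. V x)" "all_inf_runs_reach A V' q0 F"
      using shrink_wide_gap[OF wf less.prems] by blast
    then show ?thesis using less.hyps by blast
  qed
qed

lemma fact_bound_le_exp:
  fixes n p s :: nat
  assumes "n \<le> s" "p \<le> s" "1 \<le> s"
  shows "(fact n + n + 2) * (p + 1) \<le> (2::nat) ^ ((s + 1) ^ 3)"
proof -
  have "fact n \<le> s ^ s"
  proof -
    have "fact n \<le> n ^ n" using fact_le_power[of n, where 'a = nat] by simp
    also have "\<dots> \<le> s ^ n" using assms(1) by (rule power_mono) simp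
    also have "\<dots> \<le> s ^ s" using assms by (intro power_increasing) auto
    finally show ?thesis .
  qed
  moreover have "n \<le> s ^ s" using assms(1,3) self_le_power[of s s] by linarith
  moreover have "1 \<le> s ^ s" using assms(3) by simp
  ultimately have "fact n + n + 2 \<le> 4 * s ^ s" by linarith
  also have "s ^ s \<le> (2 ^ s) ^ s" by (intro power_mono less_imp_le[OF less_exp]) simp
  finally have "fact n + n + 2 \<le> 2 ^ (s * s + 2)" by (simp add: power_mult power_add)
  moreover have "p + 1 \<le> 2 ^ s" using assms(2) less_exp[of s] by linarith
  ultimately have "(fact n + n + 2) * (p + 1) \<le> 2 ^ (s * s + 2) * 2 ^ s" by (rule mult_le_mono)
  also have "\<dots> = 2 ^ (s * s + s + 2)" by (simp add: power_add[symmetric] algebra_simps)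
  also have "\<dots> \<le> 2 ^ ((s + 1) ^ 3)"
    using assms(3) by (intro power_increasing) (auto simp: power3_eq_cube algebra_simps)
  finally show ?thesis .
qed

theorem lemma22:
  "\<exists>c::nat. \<forall>(A::ocapt) (q0::nat) (F::nat set).
     ocapt_wf A \<longrightarrow> q0 \<in> St A \<longrightarrow> F \<subseteq> St A \<longrightarrow>
     (\<exists>V. all_inf_runs_reach A V q0 F) \<longrightarrow>
     (\<exists>V'. (\<forall>x\<in>Par A. V' x \<le> 2 ^ ((ocapt_size A + 1) ^ c))
           \<and> all_inf_runs_reach A V' q0 F)"
proof (intro exI[of _ 3] allI impI)
  fix A q0 F
  assume wf: "ocapt_wf A" and q0: "q0 \<in> St A" and "F \<subseteq> St A"
    and "\<exists>V. all_inf_runs_reach A V q0 F"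
  then obtain V' where V': "all_inf_runs_reach A V' q0 F"
    "\<forall>x\<in>Par A. V' x \<le> (fact (card (St A)) + card (St A) + 2) * (card (Par A) + 1)"
    using small_valuation_exists[OF wf] by blast
  have "0 < card (St A)" using q0 wf by (auto simp: ocapt_wf_def card_gt_0_iff)
  then have "(fact (card (St A)) + card (St A) + 2) * (card (Par A) + 1) \<le> 2 ^ ((ocapt_size A + 1) ^ 3)"
    by (intro fact_bound_le_exp) (auto simp: ocapt_size_def)
  then show "\<exists>V'. (\<forall>x\<in>Par A. V' x \<le> 2 ^ ((ocapt_size A + 1) ^ 3)) \<and> all_inf_runs_reach A V' q0 F"
    using V' order_trans by blast
qed

end
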